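(* Suppose $\bm X \in \mathscr{E}_4^N$ and $\bm Y$ is a degree 4 pseudomoment matrix extending $\bm X$. Then $\bm Y \succeq \mathrm{vec}(\bm X)\mathrm{vec}(\bm X)^\top$, and every eigenvector of $\bm Y - \mathrm{vec}(\bm X)\mathrm{vec}(\bm X)^\top$ with nonzero eigenvalue lies in the subspace $\mathrm{vec}(\mathsf{pert}_{\mathscr{E}_2^N}(\bm X)) \subset \mathbb{R}^{N^2}$. Consequently, $$\mathrm{rank}(\bm Y) \le \dim \mathsf{pert}_{\mathscr{E}_2^N}(\bm X) + 1 = \frac{\mathrm{rank}(\bm X)(\mathrm{rank}(\bm X)+1)}{2} - \mathrm{rank}(\bm X^{\odot 2}) + 1 \le \frac{\mathrm{rank}(\bm X)(\mathrm{rank}(\bm X)+1)}{2}.$$ In particular, if $\bm X$ is an extreme point of $\mathscr{E}_2^N$ and is extended by some degree 4 pseudomoment matrix $\bm Y$, then $\mathrm{rank}(\bm Y) = \mathrm{rank}(\bm X) = 1$, and $\bm X = \bm x\bm x^\top$, $\bm Y = (\bm x\otimes\bm x)(\bm x\otimes \bm x)^\top$ for some $\bm x \in \{\pm1\}^N$.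
   Context: $\mathscr{E}_2^N := \{\bm X \in \mathbb{R}^{N\times N}_{\mathrm{sym}} : \bm X\succeq 0,\ X_{ii} = 1 \ \forall i\}$ (the elliptope). For a closed convex set $K$ in a real vector space $E$ and $\bm X \in K$, $\mathsf{pert}_K(\bm X) := \{\bm A \in E : \bm X \pm t\bm A \in K \text{ for all sufficiently small } t>0\}$; here $E = \mathbb{R}^{N\times N}_{\mathrm{sym}}$. For $\bm A \in \mathbb{R}^{N\times N}$, $\mathrm{vec}(\bm A)\in\mathbb{R}^{N^2}$ has entries $\mathrm{vec}(\bm A)_{(ij)} = A_{ij}$, indices $(ij)$ ordered lexicographically. $\bm X^{\odot 2}$ is the entrywise square of $\bm X$. A degree 4 pseudomoment matrix is a matrix $\bm Y \in \mathbb{R}^{N^2\times N^2}$, rows and columns indexed by pairs $(ij)\in[N]^2$ (lexicographically ordered), such that: (1) $\bm Y\succeq 0$; (2) $Y_{(ij)(kk)}$ does not depend on $k$; (3) $Y_{(ii)(ii)} = 1$ for all $i$; (4) $Y_{(ij)(k\ell)}$ is invariant under all permutations of the four indices $i,j,k,\ell$. Such $\bm Y$ extends $\bm X\in\mathbb{R}^{N\times N}_{\mathrm{sym}}$ if $Y_{(1i)(1j)} = X_{ij}$ for all $i,j$. $\mathscr{E}_4^N$ is the set of symmetric $\bm X \in \mathbb{R}^{N\times N}$ that are extended by some degree 4 pseudomoment matrix. *)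

theory Defs
  imports "HOL-Analysis.Analysis"
begin

definition symm :: "real^'m^'m \<Rightarrow> bool" where
  "symm A \<longleftrightarrow> transpose A = A"

definition psd :: "real^'m^'m \<Rightarrow> bool" where
  "psd A \<longleftrightarrow> symm A \<and> (\<forall>x. 0 \<le> x \<bullet> (A *v x))"

definition outer :: "real^'m \<Rightarrow> real^'m \<Rightarrow> real^'m^'m" where
  "outer u v = (\<chi> a b. u $ a * v $ b)"

definition vecM :: "real^'n^'n \<Rightarrow> real^('n \<times> 'n)" where
  "vecM A = (\<chi> p. A $ fst p $ snd p)"

definition kron :: "real^'n \<Rightarrow> real^('n \<times> 'n)" where
  "kron x = (\<chi> p. x $ fst p * x $ snd p)"

definition hsq :: "real^'n^'n \<Rightarrow> real^'n^'n" where
  "hsq X = (\<chi> i j. (X $ i $ j)^2)"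

definition elliptope2 :: "(real^'n^'n) set" where
  "elliptope2 = {X. psd X \<and> (\<forall>i. X $ i $ i = 1)}"

definition pert :: "(real^'n^'n) set \<Rightarrow> real^'n^'n \<Rightarrow> (real^'n^'n) set" where
  "pert K X = {A. symm A \<and> (\<exists>e>0. \<forall>t. 0 < t \<and> t < e \<longrightarrow> X + t *\<^sub>R A \<in> K \<and> X - t *\<^sub>R A \<in> K)}"

definition pseudomoment4 :: "real^('n::finite \<times> 'n)^('n \<times> 'n) \<Rightarrow> bool" where
  "pseudomoment4 Y \<longleftrightarrow>
     psd Y \<and>
     (\<forall>i j k l. Y $ (i,j) $ (k,k) = Y $ (i,j) $ (l,l)) \<and>
     (\<forall>i. Y $ (i,i) $ (i,i) = 1) \<and>
     (\<forall>i j k l \<sigma>. \<sigma> permutes {0..<4::nat} \<longrightarrow>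
        (let w = (\<lambda>m. [i,j,k,l] ! \<sigma> m) in Y $ (w 0, w 1) $ (w 2, w 3)) = Y $ (i,j) $ (k,l))"

text \<open>Index 1 of [N] is the least element of the index type.\<close>
definition extends4 :: "((real, 'n::{finite,wellorder} \<times> 'n) vec, 'n \<times> 'n) vec \<Rightarrow> ((real, 'n) vec, 'n) vec \<Rightarrow> bool" where
  "extends4 Y X \<longleftrightarrow> (\<forall>i j. Y $ (LEAST k. True, i) $ (LEAST k. True, j) = X $ i $ j)"

definition elliptope4 :: "((real, 'n::{finite,wellorder}) vec, 'n) vec set" where
  "elliptope4 = {X. symm X \<and> (\<exists>Y. pseudomoment4 Y \<and> extends4 Y X)}"

end

theory Submission
  imports Defs
begin

text \<open>Column \<open>(a, a)\<close> of \<open>Y\<close> is \<open>vec X\<close> and its \<open>(a, a)\<close> entry is \<open>1\<close>, so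
  \<open>Y - vec X vec X\<^sup>T\<close> is a Schur complement of \<open>Y\<close> and hence positive semidefinite.
  Every block \<open>(a, \<cdot>) \<times> (a, \<cdot>)\<close> of \<open>Y\<close> equals \<open>X\<close>, so each column of the
  residual, reshaped into a square matrix, is symmetric, has zero diagonal and annihilates the
  kernel of \<open>X\<close>; these are exactly the perturbations of the elliptope at \<open>X\<close>. Hence the
  range of \<open>Y\<close> lies in the span of \<open>vec X\<close> and \<open>vec (pert X)\<close>.
  Factoring \<open>X = W W\<^sup>T\<close> with \<open>W\<close> of full column rank \<open>r\<close>, the perturbations are the
  matrices \<open>W B W\<^sup>T\<close> with \<open>B\<close> symmetric and \<open>diag (W B W\<^sup>T) = 0\<close>; the diagonal map
  \<open>B \<mapsto> diag (W B W\<^sup>T)\<close> has rank \<open>rank (X \<odot> X)\<close>, which gives the dimension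
  \<open>r (r + 1) / 2 - rank (X \<odot> X)\<close>. At an extreme point there are no perturbations, so
  \<open>Y = vec X vec X\<^sup>T\<close>, which forces \<open>X = x x\<^sup>T\<close> for a sign vector \<open>x\<close>.\<close>

section \<open>Quadratic forms and positive semidefinite matrices\<close>

lemma symm_entry: "symm A \<Longrightarrow> A $ j $ i = A $ i $ j"
  unfolding symm_def by (metis transpose_def vec_lambda_beta)

lemma psd_imp_symm: "psd A \<Longrightarrow> symm A"
  by (simp add: psd_def)

lemma symm_inner_commute:
  fixes A :: "real^'m^'m"
  assumes "symm A"
  shows "x \<bullet> (A *v y) = y \<bullet> (A *v x)"
  by (metis assms dot_lmul_matrix inner_commute symm_def transpose_matrix_vector)

lemma inner_mult_transpose: "(x::real^'m) \<bullet> ((A::real^'n^'m) *v y) = (transpose A *v x) \<bullet> y"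
  by (metis dot_lmul_matrix transpose_matrix_vector)

lemma quadratic_form_add_scaleR:
  fixes A :: "real^'m^'m"
  assumes "symm A"
  shows "(x + t *\<^sub>R y) \<bullet> (A *v (x + t *\<^sub>R y)) =
     x \<bullet> (A *v x) + 2 * t * (y \<bullet> (A *v x)) + t^2 * (y \<bullet> (A *v y))"
  using symm_inner_commute[OF assms, of x y]
  by (simp add: matrix_vector_right_distrib matrix_vector_mult_scaleR inner_add_left
      inner_add_right power2_eq_square algebra_simps)

lemma linear_coeff_eq_0_if_nonneg:
  fixes a b :: real
  assumes "\<And>t. 0 \<le> a * t + b * t^2"
  shows "a = 0"
proof (rule ccontr)
  assume "a \<noteq> 0"
  define c where "c = \<bar>b\<bar> + 1"
  have c: "c > 0" "b \<le> c" unfolding c_def by auto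
  define t where "t = - a / (2 * c)"
  have "b * t^2 \<le> c * t^2" using c by (simp add: mult_right_mono)
  moreover have "a * t + c * t^2 = - (a^2) / (4 * c)"
    using c unfolding t_def by (simp add: field_simps power2_eq_square)
  moreover have "- (a^2) / (4 * c) < 0"
    using c \<open>a \<noteq> 0\<close> by (simp add: divide_pos_pos)
  ultimately show False using assms[of t] by linarith
qed

lemma psd_mult_eq_0_if_quadratic_eq_0:
  fixes A :: "real^'m^'m"
  assumes "psd A" "x \<bullet> (A *v x) = 0"
  shows "A *v x = 0"
proof -
  let ?y = "A *v x"
  have "0 \<le> (2 * (?y \<bullet> ?y)) * t + (?y \<bullet> (A *v ?y)) * t^2" for t
  proof -
    have "0 \<le> (x + t *\<^sub>R ?y) \<bullet> (A *v (x + t *\<^sub>R ?y))"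
      using assms(1) psd_def by blast
    then show ?thesis
      unfolding quadratic_form_add_scaleR[OF psd_imp_symm[OF assms(1)]]
      using assms(2) by (simp add: algebra_simps)
  qed
  from linear_coeff_eq_0_if_nonneg[OF this] show ?thesis by simp
qed

lemma psd_cauchy_schwarz:
  fixes A :: "real^'m^'m"
  assumes "psd A" "e \<bullet> (A *v e) = 1"
  shows "(e \<bullet> (A *v z))^2 \<le> z \<bullet> (A *v z)"
proof -
  define s where "s = - (e \<bullet> (A *v z))"
  have "0 \<le> (z + s *\<^sub>R e) \<bullet> (A *v (z + s *\<^sub>R e))"
    using assms(1) psd_def by blast
  also have "\<dots> = z \<bullet> (A *v z) - (e \<bullet> (A *v z))^2"
    unfolding quadratic_form_add_scaleR[OF psd_imp_symm[OF assms(1)]] s_def assms(2)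
    by (simp add: power2_eq_square)
  finally show ?thesis by simp
qed

lemma outer_mult_vector: "outer u v *v z = (v \<bullet> z) *\<^sub>R u"
  by (simp add: outer_def matrix_vector_mult_def vec_eq_iff inner_vec_def sum_distrib_left
      algebra_simps)

lemma symm_outer_self: "symm (outer v v)"
  by (simp add: symm_def outer_def transpose_def vec_eq_iff)

lemma psd_schur_complement:
  fixes A :: "real^'m^'m"
  assumes "psd A" "e \<bullet> (A *v e) = 1"
  shows "psd (A - outer (A *v e) (A *v e))"
proof -
  have s: "symm A" using assms(1) by (rule psd_imp_symm)
  have "symm (A - outer (A *v e) (A *v e))"
    using s symm_outer_self by (simp add: symm_def transpose_def vec_eq_iff)
  moreover have "0 \<le> x \<bullet> ((A - outer (A *v e) (A *v e)) *v x)" for x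
  proof -
    have "(A *v e) \<bullet> x = e \<bullet> (A *v x)"
      using symm_inner_commute[OF s, of e x] by (simp add: inner_commute)
    then show ?thesis
      using psd_cauchy_schwarz[OF assms, of x]
      by (simp add: matrix_vector_mult_diff_rdistrib outer_mult_vector inner_diff_right
          power2_eq_square inner_commute[of x "A *v e"])
  qed
  ultimately show ?thesis by (simp add: psd_def)
qed

lemma mult_axis_component: "((A::real^'m^'k) *v axis i 1) $ a = A $ a $ i"
  by (simp add: matrix_vector_mult_basis column_def)

lemma axis_inner_mult_axis: "axis j 1 \<bullet> ((A::real^'m^'m) *v axis i 1) = A $ j $ i"
  by (metis cart_eq_inner_axis column_def inner_commute matrix_vector_mult_basis vec_lambda_beta)

lemma psd_diag_nonneg: "psd A \<Longrightarrow> 0 \<le> A $ i $ i"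
  using axis_inner_mult_axis[of i A i] psd_def by metis

lemma psd_mult_axis_eq_0: "psd (A::real^'m^'m) \<Longrightarrow> A $ i $ i = 0 \<Longrightarrow> A *v axis i 1 = 0"
  using axis_inner_mult_axis[of i A i] psd_mult_eq_0_if_quadratic_eq_0 by metis

section \<open>Rank and nullity\<close>

lemma dim_image_add_dim_kernel:
  fixes f :: "'a::euclidean_space \<Rightarrow> 'b::euclidean_space"
  assumes lf: "linear f" and S: "subspace S"
  shows "dim (f ` S) + dim {x\<in>S. f x = 0} = dim S"
proof -
  let ?N = "{x\<in>S. f x = 0}"
  let ?C = "{y\<in>S. \<forall>x\<in>?N. orthogonal x y}"
  have subN: "subspace ?N"
    using S lf unfolding subspace_def by (auto simp: linear_add linear_scale linear_0)
  have subC: "subspace ?C"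
    using S unfolding subspace_def orthogonal_def by (auto simp: inner_add_right)
  have dimC: "dim ?C + dim ?N = dim S"
    by (rule dim_subspace_orthogonal_to_vectors[OF subN S]) auto
  have "f ` S \<subseteq> f ` ?C"
  proof
    fix u assume "u \<in> f ` S"
    then obtain x where x: "x \<in> S" "u = f x" by auto
    obtain y z where yz: "y \<in> span ?N" "\<And>v. v \<in> span ?N \<Longrightarrow> orthogonal z v" "x = y + z"
      using orthogonal_subspace_decomp_exists[of ?N x] by metis
    have spN: "span ?N = ?N" using span_eq_iff[THEN iffD2, OF subN] .
    have yN: "y \<in> ?N" using yz(1) spN by simp
    have "z = x - y" using yz(3) by simp
    then have "z \<in> S" using subspace_diff[OF S x(1)] yN by simp
    moreover have "\<forall>v\<in>?N. orthogonal v z"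
      using yz(2) spN orthogonal_commute by blast
    moreover have "f x = f z" using yz(3) yN lf by (simp add: linear_add)
    ultimately show "u \<in> f ` ?C" using x(2) by blast
  qed
  then have img: "f ` S = f ` ?C" by auto
  have injC: "inj_on f ?C"
  proof (rule inj_onI)
    fix a b assume ab: "a \<in> ?C" "b \<in> ?C" "f a = f b"
    have "a - b \<in> ?C" using subspace_diff[OF subC ab(1) ab(2)] .
    moreover have "a - b \<in> ?N" using ab S lf by (simp add: linear_diff subspace_diff)
    ultimately have "orthogonal (a - b) (a - b)" by blast
    then show "a = b" by (simp add: orthogonal_def)
  qed
  have spanC: "span ?C = ?C" using span_eq_iff[THEN iffD2, OF subC] .
  have "dim (f ` ?C) = dim ?C"
    by (rule dim_image_eq[OF lf]) (unfold spanC, rule injC)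
  then show ?thesis using dimC img by simp
qed

lemma subspace_matrix_kernel: "subspace {x. (A::real^'n^'m) *v x = 0}"
  using linear_subspace_kernel[OF matrix_vector_mul_linear] .

lemma rank_add_dim_kernel:
  fixes A :: "real^'n^'m"
  shows "rank A + dim {x. A *v x = 0} = CARD('n)"
  using dim_image_add_dim_kernel[OF matrix_vector_mul_linear subspace_UNIV, of A]
  by (simp add: rank_dim_range)

lemma rank_mult_transpose_self:
  fixes A :: "real^'n^'m"
  shows "rank (A ** transpose A) = rank A"
proof -
  have "(A ** transpose A) *v x = 0 \<longleftrightarrow> transpose A *v x = 0" for x
  proof
    assume "(A ** transpose A) *v x = 0"
    then have "x \<bullet> (A *v (transpose A *v x)) = 0"
      by (metis matrix_vector_mul_assoc inner_zero_right)
    then have "(transpose A *v x) \<bullet> (transpose A *v x) = 0"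
      using inner_mult_transpose by metis
    then show "transpose A *v x = 0" by simp
  next
    assume "transpose A *v x = 0"
    then show "(A ** transpose A) *v x = 0"
      by (metis matrix_vector_mul_assoc matrix_vector_mult_0_right)
  qed
  then have "{x. (A ** transpose A) *v x = 0} = {x. transpose A *v x = 0}" by auto
  then show ?thesis
    using rank_add_dim_kernel[of "A ** transpose A"] rank_add_dim_kernel[of "transpose A"]
      rank_transpose by (metis add_right_cancel)
qed

lemma rank_le_dim_if_mult_in_span:
  fixes A :: "real^'n^'m"
  assumes "\<And>x. A *v x \<in> span P"
  shows "rank A \<le> dim P"
proof -
  have "rank A \<le> dim (span P)"
    unfolding rank_dim_range by (rule dim_subset) (use assms in auto)
  then show ?thesis by simp
qed

lemma rank_outer_self:
  assumes "x \<noteq> 0"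
  shows "rank (outer x x) = 1"
proof -
  have "rank (outer x x) \<le> dim {x}"
    by (rule rank_le_dim_if_mult_in_span, unfold outer_mult_vector) (intro span_mul span_base, simp)
  moreover have "outer x x \<noteq> 0"
    using assms by (simp add: outer_def vec_eq_iff)
  then have "rank (outer x x) \<noteq> 0" by (simp add: rank_eq_0)
  ultimately show ?thesis
    using dim_le_card'[of "{x}"] by simp
qed

section \<open>Factorization of positive semidefinite matrices\<close>

lemma psd_peel_outer:
  fixes X :: "real^'m^'m"
  assumes psd: "psd X" and Xii: "X $ i $ i \<noteq> 0"
  obtains v where "psd (X - outer v v)" "rank (X - outer v v) < rank X"
    "(X - outer v v) $ i $ i = 0" "\<And>z. X *v z = 0 \<Longrightarrow> (X - outer v v) *v z = 0"
proof -
  define d where "d = X $ i $ i"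
  have d: "d > 0" using psd_diag_nonneg[OF psd, of i] Xii d_def by linarith
  define e where "e = (1 / sqrt d) *\<^sub>R (axis i 1 :: real^'m)"
  have e1: "e \<bullet> (X *v e) = 1"
    using d by (simp add: e_def matrix_vector_mult_scaleR axis_inner_mult_axis d_def[symmetric])
  define X' where "X' = X - outer (X *v e) (X *v e)"
  have psdX': "psd X'" unfolding X'_def by (rule psd_schur_complement[OF psd e1])
  have X'_mult: "X' *v z = X *v z - (e \<bullet> (X *v z)) *\<^sub>R (X *v e)" for z
    using symm_inner_commute[OF psd_imp_symm[OF psd], of z e] unfolding X'_def
    by (simp add: matrix_vector_mult_diff_rdistrib outer_mult_vector inner_commute)
  have kernel: "X' *v z = 0" if "X *v z = 0" for z
    using X'_mult that by simp
  have X'_axis: "X' *v axis i 1 = 0"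
  proof -
    have "axis i 1 = sqrt d *\<^sub>R e" unfolding e_def using d by simp
    then show ?thesis using X'_mult[of e] e1 by (simp add: matrix_vector_mult_scaleR)
  qed
  have "axis i 1 \<notin> span {x. X *v x = 0}"
    using Xii span_eq_iff[THEN iffD2, OF subspace_matrix_kernel[of X]]
    by (metis (mono_tags) mem_Collect_eq mult_axis_component zero_index)
  then have "dim {x. X *v x = 0} + 1 = dim (insert (axis i 1) {x. X *v x = 0})"
    by (simp add: dim_insert)
  also have "\<dots> \<le> dim {x. X' *v x = 0}"
    by (rule dim_subset) (use kernel X'_axis in auto)
  finally have "rank X' < rank X"
    using rank_add_dim_kernel[of X] rank_add_dim_kernel[of X'] by linarith
  moreover have "X' $ i $ i = 0"
    using X'_axis by (metis mult_axis_component zero_index)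
  ultimately show thesis
    using that[of "X *v e"] psdX' kernel unfolding X'_def by blast
qed

text \<open>Peeling off one rank-one term per step; each term is indexed by a diagonal position
  that the remainder no longer uses, so the index set injects into the index type.\<close>

lemma psd_outer_sum_decomposition:
  fixes X :: "real^'m^'m"
  assumes "psd X"
  shows "\<exists>S w. X = (\<Sum>i\<in>S. outer (w i) (w i)) \<and> card S \<le> rank X \<and> (\<forall>j\<in>S. X $ j $ j \<noteq> 0)"
  using assms
proof (induction "rank X" arbitrary: X rule: less_induct)
  case (less X)
  show ?case
  proof (cases "\<forall>i. X $ i $ i = 0")
    case True
    then have "X $ a $ i = 0" for a i
      using psd_mult_axis_eq_0[OF less.prems] by (metis mult_axis_component zero_index)
    then have "X = 0" by (simp add: vec_eq_iff)
    then show ?thesis by (intro exI[of _ "{}"]) auto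
  next
    case False
    then obtain i where Xii: "X $ i $ i \<noteq> 0" by blast
    obtain v where psd': "psd (X - outer v v)" and rk: "rank (X - outer v v) < rank X"
      and ii: "(X - outer v v) $ i $ i = 0"
      and kernel: "\<And>z. X *v z = 0 \<Longrightarrow> (X - outer v v) *v z = 0"
      using psd_peel_outer[OF less.prems Xii] by blast
    obtain S w where S: "X - outer v v = (\<Sum>i\<in>S. outer (w i) (w i))"
      "card S \<le> rank (X - outer v v)" "\<forall>j\<in>S. (X - outer v v) $ j $ j \<noteq> 0"
      using less.hyps[OF rk psd'] by blast
    have iS: "i \<notin> S" using S(3) ii by blast
    have diag: "X $ j $ j \<noteq> 0" if "j \<in> S" for j
      using S(3) that kernel psd_mult_axis_eq_0[OF less.prems]
      by (metis mult_axis_component zero_index)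
    have "X = (\<Sum>k\<in>insert i S. outer ((w(i := v)) k) ((w(i := v)) k))"
    proof -
      have "(\<Sum>k\<in>S. outer ((w(i := v)) k) ((w(i := v)) k)) = X - outer v v"
        unfolding S(1) using iS by (intro sum.cong) auto
      then show ?thesis using iS by simp
    qed
    moreover have "card (insert i S) \<le> rank X" using iS S(2) rk by simp
    ultimately show ?thesis using diag Xii by blast
  qed
qed

lemma outer_sum_mult_vector:
  "(\<Sum>i\<in>S. outer (w i) (w i)) *v z = (\<Sum>i\<in>S. (w i \<bullet> z) *\<^sub>R w i)"
proof (induction S rule: infinite_finite_induct)
  case (insert x F)
  then show ?case by (simp add: matrix_vector_mult_add_rdistrib outer_mult_vector)
qed auto

lemma psd_factorization:
  fixes X :: "real^'m^'m"
  assumes "psd X"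
  obtains S :: "'m set" and w
  where "X = (\<Sum>i\<in>S. outer (w i) (w i))" "card S = rank X" "inj_on w S" "independent (w ` S)"
proof -
  obtain S :: "'m set" and w where X: "X = (\<Sum>i\<in>S. outer (w i) (w i))" and S: "card S \<le> rank X"
    using psd_outer_sum_decomposition[OF assms] by blast
  have "rank X \<le> dim (w ` S)"
    unfolding X
    by (rule rank_le_dim_if_mult_in_span, unfold outer_sum_mult_vector)
      (intro span_sum span_mul span_base, simp)
  moreover have "dim (w ` S) \<le> card (w ` S)" by (simp add: dim_le_card')
  moreover have "card (w ` S) \<le> card S" by (simp add: card_image_le)
  ultimately have eq: "card S = rank X" "card (w ` S) = card S" "dim (w ` S) = card (w ` S)"
    using S by linarith+
  have "inj_on w S" using eq(2) by (simp add: eq_card_imp_inj_on)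
  moreover have "independent (w ` S)"
    using eq(3) card_eq_dim[of "w ` S" "w ` S"] span_superset[of "w ` S"] by simp
  ultimately show ?thesis using that X eq(1) by blast
qed

section \<open>Perturbations of the elliptope\<close>

definition admissible_direction :: "real^'n^'n \<Rightarrow> real^'n^'n \<Rightarrow> bool" where
  "admissible_direction X A \<longleftrightarrow>
     symm A \<and> (\<forall>i. A $ i $ i = 0) \<and> (\<forall>z. X *v z = 0 \<longrightarrow> A *v z = 0)"

lemma pert_elliptope2_imp_admissible:
  fixes X :: "real^'n^'n"
  assumes diag: "\<forall>i. X $ i $ i = 1" and A: "A \<in> pert elliptope2 X"
  shows "admissible_direction X A"
proof -
  obtain e where e: "e > 0"
    "\<forall>t. 0 < t \<and> t < e \<longrightarrow> X + t *\<^sub>R A \<in> elliptope2 \<and> X - t *\<^sub>R A \<in> elliptope2"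
    and sA: "symm A"
    using A unfolding pert_def by blast
  define t where "t = e / 2"
  have t: "0 < t" "t < e" using e(1) by (auto simp: t_def)
  have plus: "psd (X + t *\<^sub>R A)" "\<forall>i. (X + t *\<^sub>R A) $ i $ i = 1" and minus: "psd (X - t *\<^sub>R A)"
    using e(2) t unfolding elliptope2_def by auto
  have "A $ i $ i = 0" for i
    using plus(2) diag t(1) by simp
  moreover have "A *v z = 0" if z: "X *v z = 0" for z
  proof -
    have form: "z \<bullet> ((X + u *\<^sub>R A) *v z) = u * (z \<bullet> (A *v z))"
      and mult: "(X + u *\<^sub>R A) *v z = u *\<^sub>R (A *v z)" for u
      using z by (simp_all add: matrix_vector_mult_add_rdistrib scaleR_matrix_vector_assoc[symmetric])
    have "X - t *\<^sub>R A = X + (- t) *\<^sub>R A" by simp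
    then have "0 \<le> t * (z \<bullet> (A *v z))" "0 \<le> - t * (z \<bullet> (A *v z))"
      using plus(1) minus form unfolding psd_def by metis+
    then have "z \<bullet> ((X + t *\<^sub>R A) *v z) = 0" unfolding form by linarith
    then have "(X + t *\<^sub>R A) *v z = 0" by (rule psd_mult_eq_0_if_quadratic_eq_0[OF plus(1)])
    then show ?thesis using t(1) unfolding mult by simp
  qed
  ultimately show ?thesis using sA by (simp add: admissible_direction_def)
qed

lemma pert_elliptope2_if_form_bounded:
  fixes X :: "real^'n^'n"
  assumes X: "psd X" "\<forall>i. X $ i $ i = 1" and A: "symm A" "\<forall>i. A $ i $ i = 0"
    and c: "c \<ge> 0" "\<And>z. \<bar>z \<bullet> (A *v z)\<bar> \<le> c * (z \<bullet> (X *v z))"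
  shows "A \<in> pert elliptope2 X"
proof -
  have mem: "X + s *\<^sub>R A \<in> elliptope2" if s: "\<bar>s\<bar> * (c + 1) < 1" for s
  proof -
    have "0 \<le> z \<bullet> ((X + s *\<^sub>R A) *v z)" for z
    proof -
      have "\<bar>s * (z \<bullet> (A *v z))\<bar> \<le> (\<bar>s\<bar> * c) * (z \<bullet> (X *v z))"
        using c(2)[of z] by (simp add: abs_mult mult_left_mono mult.assoc)
      also have "\<dots> \<le> 1 * (z \<bullet> (X *v z))"
      proof (rule mult_right_mono)
        show "\<bar>s\<bar> * c \<le> 1" using s c(1) by (smt (verit) abs_ge_zero mult_nonneg_nonneg distrib_left)
        show "0 \<le> z \<bullet> (X *v z)" using X(1) by (simp add: psd_def)
      qed
      finally show ?thesis
        by (simp add: matrix_vector_mult_add_rdistrib scaleR_matrix_vector_assoc[symmetric]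
            inner_add_right)
    qed
    moreover have "symm (X + s *\<^sub>R A)"
      using X(1) A(1) by (simp add: psd_def symm_def transpose_def vec_eq_iff)
    ultimately show ?thesis using X(2) A(2) by (simp add: elliptope2_def psd_def)
  qed
  have "X + t *\<^sub>R A \<in> elliptope2 \<and> X - t *\<^sub>R A \<in> elliptope2" if "0 < t \<and> t < 1 / (c + 1)" for t
    using that c(1) mem[of t] mem[of "-t"] by (simp add: field_simps)
  moreover have "1 / (c + 1) > 0" using c(1) by simp
  ultimately show ?thesis unfolding pert_def using A(1) by blast
qed

section \<open>Matrices in the span of a frame\<close>

text \<open>With \<open>W\<close> the matrix whose columns are the \<open>w i\<close>, \<open>i \<in> S\<close>, the matrix
  \<open>frame_matrix S w B\<close> is \<open>W B W\<^sup>T\<close>; the paper writes \<open>V S V\<^sup>T\<close>.\<close>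

definition frame_matrix :: "'n set \<Rightarrow> ('n \<Rightarrow> real^'n) \<Rightarrow> real^'n^'n \<Rightarrow> real^'n^'n" where
  "frame_matrix S w B = (\<chi> a b. \<Sum>i\<in>S. \<Sum>j\<in>S. B $ i $ j * (w i $ a * w j $ b))"

lemma frame_matrix_entry:
  "frame_matrix S w B $ a $ b = (\<Sum>i\<in>S. \<Sum>j\<in>S. B $ i $ j * (w i $ a * w j $ b))"
  by (simp add: frame_matrix_def)

definition sym_on :: "'n set \<Rightarrow> (real^'n^'n) set" where
  "sym_on S = {B. symm B \<and> (\<forall>i j. B $ i $ j \<noteq> 0 \<longrightarrow> i \<in> S \<and> j \<in> S)}"

definition diag_vec :: "real^'n^'n \<Rightarrow> real^'n" where
  "diag_vec A = (\<chi> a. A $ a $ a)"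

lemma linear_diag_vec: "linear diag_vec"
  by (rule linearI) (simp_all add: diag_vec_def vec_eq_iff)

lemma linear_frame_matrix: "linear (frame_matrix S w)"
  by (rule linearI)
    (simp_all add: vec_eq_iff frame_matrix_def sum.distrib ring_distribs sum_distrib_left mult.assoc)

lemma frame_matrix_mult_vector:
  "frame_matrix S w B *v z = (\<Sum>i\<in>S. (\<Sum>j\<in>S. B $ i $ j * (w j \<bullet> z)) *\<^sub>R w i)"
proof -
  have "(frame_matrix S w B *v z) $ a = (\<Sum>i\<in>S. (\<Sum>j\<in>S. B $ i $ j * (w j \<bullet> z)) *\<^sub>R w i) $ a" for a
  proof -
    have "(frame_matrix S w B *v z) $ a =
        (\<Sum>b\<in>UNIV. \<Sum>i\<in>S. \<Sum>j\<in>S. B $ i $ j * (w i $ a * w j $ b) * z $ b)"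
      by (simp add: frame_matrix_def matrix_vector_mult_def sum_distrib_right)
    also have "\<dots> = (\<Sum>i\<in>S. \<Sum>j\<in>S. \<Sum>b\<in>UNIV. B $ i $ j * (w i $ a * w j $ b) * z $ b)"
      by (subst sum.swap) (subst (2) sum.swap, simp)
    also have "\<dots> = (\<Sum>i\<in>S. (\<Sum>j\<in>S. B $ i $ j * (w j \<bullet> z)) * w i $ a)"
      by (simp add: inner_vec_def sum_distrib_left sum_distrib_right mult_ac)
    finally show ?thesis by (simp add: sum_component)
  qed
  then show ?thesis by (simp add: vec_eq_iff)
qed

lemma frame_matrix_quadratic_form:
  "z \<bullet> (frame_matrix S w B *v z) = (\<Sum>i\<in>S. \<Sum>j\<in>S. B $ i $ j * (w j \<bullet> z) * (w i \<bullet> z))"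
  unfolding frame_matrix_mult_vector
  by (simp add: inner_sum_right sum_distrib_right inner_commute[of z])

lemma symm_frame_matrix:
  assumes "B \<in> sym_on S"
  shows "symm (frame_matrix S w B)"
proof -
  have "B $ j $ i = B $ i $ j" for i j
    using assms by (simp add: sym_on_def symm_entry)
  then have "frame_matrix S w B $ b $ a = frame_matrix S w B $ a $ b" for a b
    unfolding frame_matrix_def by (subst sum.swap) (simp add: mult.commute)
  then show ?thesis by (simp add: symm_def transpose_def vec_eq_iff)
qed

lemma subspace_sym_on: "subspace (sym_on S)"
  unfolding subspace_def sym_on_def symm_def
  by (auto simp: vec_eq_iff transpose_def) (metis add.left_neutral)+

lemma card_upper_triangle:
  fixes S :: "'a::linorder set"
  assumes "finite S"
  shows "2 * card {p\<in>S \<times> S. fst p \<le> snd p} = card S * (card S + 1)"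
proof -
  let ?U = "{p\<in>S \<times> S. fst p \<le> snd p}"
  let ?L = "{p\<in>S \<times> S. snd p < fst p}"
  let ?Lt = "{p\<in>S \<times> S. fst p < snd p}"
  let ?D = "{p\<in>S \<times> S. fst p = snd p}"
  have f: "finite (S \<times> S)" using assms by simp
  have "card ?U + card ?L = card (S \<times> S)"
    by (subst card_Un_disjoint[symmetric]) (auto intro: finite_subset[OF _ f] arg_cong[where f=card])
  then have 1: "card ?U + card ?L = card S * card S" by (simp add: card_cartesian_product)
  have "?L = (\<lambda>(a, b). (b, a)) ` ?Lt" by (auto simp: image_def)
  moreover have "inj_on (\<lambda>(a, b). (b, a)) ?Lt" by (auto simp: inj_on_def)
  ultimately have 2: "card ?L = card ?Lt" by (simp add: card_image)
  have "card ?U = card ?Lt + card ?D"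
    by (subst card_Un_disjoint[symmetric]) (auto intro: finite_subset[OF _ f] arg_cong[where f=card])
  moreover have "?D = (\<lambda>i. (i, i)) ` S" by auto
  then have "card ?D = card S" by (simp add: card_image inj_on_def)
  ultimately have 3: "card ?U = card ?Lt + card S" by simp
  from 1 2 3 show ?thesis by (simp add: algebra_simps)
qed

definition upper_vec :: "real^('n::{finite,linorder})^('n::{finite,linorder}) \<Rightarrow> real^('n \<times> 'n)" where
  "upper_vec B = (\<chi> p. if fst p \<le> snd p then B $ fst p $ snd p else 0)"

lemma upper_vec_image_sym_on:
  "upper_vec ` sym_on S = {y. \<forall>p. p \<notin> {p\<in>S \<times> S. fst p \<le> snd p} \<longrightarrow> y $ p = 0}"
    (is "_ = ?V")
proof
  show "upper_vec ` sym_on S \<subseteq> ?V"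
    by (auto simp: upper_vec_def sym_on_def split: if_splits)
  show "?V \<subseteq> upper_vec ` sym_on S"
  proof
    fix y assume y: "y \<in> ?V"
    define B where "B = (\<chi> i j. if i \<le> j then y $ (i, j) else y $ (j, i))"
    have "B \<in> sym_on S"
      using y by (auto simp: sym_on_def symm_def vec_eq_iff transpose_def B_def split: if_splits)
    moreover have "upper_vec B = y" using y by (auto simp: vec_eq_iff upper_vec_def B_def)
    ultimately show "y \<in> upper_vec ` sym_on S" by blast
  qed
qed

lemma inj_on_upper_vec: "inj_on upper_vec (sym_on S)"
proof (rule inj_onI)
  fix B C assume B: "B \<in> sym_on S" and C: "C \<in> sym_on S" and eq: "upper_vec B = upper_vec C"
  have upper: "B $ i $ j = C $ i $ j" if "i \<le> j" for i j
    using that arg_cong[OF eq, of "\<lambda>y. y $ (i, j)"] by (simp add: upper_vec_def)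
  have "B $ i $ j = C $ i $ j" for i j
    using upper[of i j] upper[of j i] B C by (cases "i \<le> j") (auto simp: sym_on_def symm_entry)
  then show "B = C" by (simp add: vec_eq_iff)
qed

lemma linear_upper_vec: "linear upper_vec"
  by (rule linearI) (simp_all add: upper_vec_def vec_eq_iff)

lemma dim_sym_on:
  fixes S :: "'n::{finite,linorder} set"
  shows "dim (sym_on S) = card S * (card S + 1) div 2"
proof -
  have "span (sym_on S) = sym_on S"
    using span_eq_iff[THEN iffD2, OF subspace_sym_on] .
  then have "dim (upper_vec ` sym_on S) = dim (sym_on S)"
    using dim_image_eq[OF linear_upper_vec] inj_on_upper_vec by metis
  then have "dim (sym_on S) = dim (upper_vec ` sym_on S)" by simp
  also have "\<dots> = card {p\<in>S \<times> S. fst p \<le> snd p}"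
    unfolding upper_vec_image_sym_on dim_vec_eq[symmetric] by (rule dim_substandard_cart)
  also have "\<dots> = card S * (card S + 1) div 2"
    using card_upper_triangle[of S] by simp
  finally show ?thesis .
qed

lemma independent_sum_scaleR_eq_0:
  fixes w :: "'a \<Rightarrow> 'b::euclidean_space"
  assumes ind: "independent (w ` S)" and inj: "inj_on w S" and S: "finite S"
    and sum: "(\<Sum>i\<in>S. c i *\<^sub>R w i) = 0" and i: "i \<in> S"
  shows "c i = 0"
proof -
  define u where "u v = c (inv_into S w v)" for v
  have "(\<Sum>v\<in>w ` S. u v *\<^sub>R v) = (\<Sum>i\<in>S. c i *\<^sub>R w i)"
    by (simp add: sum.reindex[OF inj] u_def inv_into_f_f[OF inj])
  then have "(\<Sum>v\<in>w ` S. u v *\<^sub>R v) = 0" using sum by simp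
  then have "\<forall>v\<in>w ` S. u v = 0"
    using ind[unfolded independent_explicit] by blast
  then show ?thesis using i inv_into_f_f[OF inj i] by (auto simp: u_def)
qed

lemma span_image_imp_sum_scaleR:
  fixes w :: "'a \<Rightarrow> 'b::euclidean_space"
  assumes "finite S" "y \<in> span (w ` S)" and inj: "inj_on w S"
  shows "\<exists>c. y = (\<Sum>i\<in>S. c i *\<^sub>R w i)"
proof -
  obtain u where y: "y = (\<Sum>v\<in>w ` S. u v *\<^sub>R v)"
    using assms(1,2) span_finite by blast
  show ?thesis
  proof
    show "y = (\<Sum>i\<in>S. u (w i) *\<^sub>R w i)" using y by (simp add: sum.reindex[OF inj])
  qed
qed

lemma in_span_if_orthogonal_to_complement:
  fixes w :: "'a \<Rightarrow> 'b::euclidean_space"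
  assumes "\<And>y. \<forall>j\<in>S. w j \<bullet> y = 0 \<Longrightarrow> v \<bullet> y = 0"
  shows "v \<in> span (w ` S)"
proof -
  obtain p q where pq: "p \<in> span (w ` S)" "\<And>x. x \<in> span (w ` S) \<Longrightarrow> orthogonal q x" "v = p + q"
    using orthogonal_subspace_decomp_exists[of "w ` S" v] by metis
  have "\<forall>j\<in>S. w j \<bullet> q = 0"
    using pq(2) span_base by (metis image_eqI orthogonal_def inner_commute)
  then have "v \<bullet> q = 0" using assms by blast
  moreover have "p \<bullet> q = 0" using pq(2)[OF pq(1)] by (simp add: orthogonal_def inner_commute)
  ultimately have "q \<bullet> q = 0" using pq(3) by (simp add: inner_add_left)
  then show ?thesis using pq by simp
qed

lemma abs_mult_le_if_squares_le:
  fixes a b Q :: real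
  assumes "a^2 \<le> Q" "b^2 \<le> Q"
  shows "\<bar>a * b\<bar> \<le> Q"
proof -
  have "0 \<le> (\<bar>a\<bar> - \<bar>b\<bar>)^2" by simp
  then have "\<bar>a * b\<bar> \<le> (a^2 + b^2) / 2" by (simp add: power2_eq_square abs_mult algebra_simps)
  then show ?thesis using assms by simp
qed

lemma sum_UNIV_prod: "(\<Sum>p\<in>UNIV. g p) = (\<Sum>i\<in>UNIV. \<Sum>j\<in>UNIV. g (i, j))"
  by (subst sum.cartesian_product) simp

lemma kron_inner: "kron x \<bullet> kron y = (x \<bullet> y)^2"
proof -
  have "kron x \<bullet> kron y = (\<Sum>i\<in>UNIV. \<Sum>j\<in>UNIV. (x $ i * y $ i) * (x $ j * y $ j))"
    by (simp add: inner_vec_def kron_def sum_UNIV_prod mult_ac)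
  also have "\<dots> = (x \<bullet> y)^2"
    by (simp add: inner_vec_def power2_eq_square sum_product)
  finally show ?thesis .
qed

lemma sum_UNIV_if_mem:
  fixes f :: "'a::finite \<Rightarrow> real"
  shows "(\<Sum>i\<in>UNIV. if i \<in> S then f i else 0) = (\<Sum>i\<in>S. f i)"
  using sum.inter_restrict[of UNIV f S] by simp

locale psd_frame =
  fixes X :: "real^'n^'n" and S :: "'n set" and w :: "'n \<Rightarrow> real^'n"
  assumes X_eq: "X = (\<Sum>i\<in>S. outer (w i) (w i))"
    and inj: "inj_on w S" and indep: "independent (w ` S)"

lemma psd_frame_exists:
  fixes X :: "real^'n^'n"
  assumes "psd X"
  obtains S w where "psd_frame X S w" "card S = rank X"
proof (rule psd_factorization[OF assms])
  fix S :: "'n set" and w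
  assume "X = (\<Sum>i\<in>S. outer (w i) (w i))" "card S = rank X" "inj_on w S" "independent (w ` S)"
  then show thesis using that[of S w] psd_frame.intro by blast
qed

context psd_frame
begin

lemma X_mult_vector: "X *v z = (\<Sum>i\<in>S. (w i \<bullet> z) *\<^sub>R w i)"
  unfolding X_eq by (rule outer_sum_mult_vector)

lemma X_kernel_iff: "X *v z = 0 \<longleftrightarrow> (\<forall>i\<in>S. w i \<bullet> z = 0)"
  using independent_sum_scaleR_eq_0[OF indep inj finite, of "\<lambda>i. w i \<bullet> z"]
  by (auto simp: X_mult_vector)

lemma X_entry: "X $ a $ b = (\<Sum>i\<in>S. w i $ a * w i $ b)"
  unfolding X_eq by (simp add: outer_def sum_component)

lemma X_quadratic_form: "z \<bullet> (X *v z) = (\<Sum>i\<in>S. (w i \<bullet> z)^2)"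
  unfolding X_mult_vector by (simp add: inner_sum_right power2_eq_square inner_commute[of z])

lemma psd_X: "psd X"
  unfolding psd_def symm_def X_quadratic_form
  by (auto simp: transpose_def vec_eq_iff X_entry mult.commute intro: sum_nonneg)

lemma frame_matrix_eq_0_imp:
  assumes "B \<in> sym_on S" "frame_matrix S w B = 0"
  shows "B = 0"
proof -
  have "B $ i $ j = 0" if ij: "i \<in> S" "j \<in> S" for i j
  proof -
    have "(\<Sum>k\<in>S. B $ i $ k * (w k \<bullet> z)) = 0" for z
      using independent_sum_scaleR_eq_0[OF indep inj finite, of "\<lambda>i. \<Sum>k\<in>S. B $ i $ k * (w k \<bullet> z)"]
        assms(2) frame_matrix_mult_vector[of S w B z] ij(1) by simp
    then have "(\<Sum>k\<in>S. B $ i $ k *\<^sub>R w k) \<bullet> z = 0" for z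
      by (simp add: inner_sum_left)
    then have "(\<Sum>k\<in>S. B $ i $ k *\<^sub>R w k) = 0"
      using inner_eq_zero_iff by blast
    then show ?thesis
      using independent_sum_scaleR_eq_0[OF indep inj finite, of "\<lambda>k. B $ i $ k"] ij(2) by simp
  qed
  moreover have "B $ i $ j = 0" if "i \<notin> S \<or> j \<notin> S" for i j
    using assms(1) that unfolding sym_on_def by blast
  ultimately show ?thesis by (simp add: vec_eq_iff) blast
qed

lemma inj_on_frame_matrix: "inj_on (frame_matrix S w) (sym_on S)"
proof (rule inj_onI)
  fix B C assume B: "B \<in> sym_on S" and C: "C \<in> sym_on S"
    and eq: "frame_matrix S w B = frame_matrix S w C"
  have "frame_matrix S w (B - C) = 0"
    using eq linear_diff[OF linear_frame_matrix, of S w B C] by simp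
  then have "B - C = 0"
    using frame_matrix_eq_0_imp subspace_diff[OF subspace_sym_on B C] by blast
  then show "B = C" by simp
qed


lemma admissible_direction_coeffs:
  assumes "admissible_direction X A"
  obtains D where "\<And>a b. A $ a $ b = (\<Sum>i\<in>S. \<Sum>k\<in>S. D i k * (w i $ a * w k $ b))"
proof -
  have sA: "symm A" using assms by (simp add: admissible_direction_def)
  have kernel: "A *v y = 0" if "\<forall>j\<in>S. w j \<bullet> y = 0" for y
    using that assms X_kernel_iff by (simp add: admissible_direction_def)
  have "A *v x \<in> span (w ` S)" for x
  proof (rule in_span_if_orthogonal_to_complement)
    fix y assume "\<forall>j\<in>S. w j \<bullet> y = 0"
    then have "A *v y = 0" by (rule kernel)
    then show "(A *v x) \<bullet> y = 0"
      using symm_inner_commute[OF sA, of y x] by (simp add: inner_commute)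
  qed
  then have "\<forall>b. \<exists>c. A *v axis b 1 = (\<Sum>i\<in>S. c i *\<^sub>R w i)"
    using span_image_imp_sum_scaleR[OF finite _ inj] by blast
  then obtain C where C: "\<And>b. A *v axis b 1 = (\<Sum>i\<in>S. C b i *\<^sub>R w i)"
    by (metis choice)
  define u where "u i = (\<chi> b. C b i)" for i
  have A_entry: "A $ a $ b = (\<Sum>i\<in>S. w i $ a * u i $ b)" for a b
  proof -
    have "A $ a $ b = (A *v axis b 1) $ a" by (simp add: mult_axis_component)
    also have "\<dots> = (\<Sum>i\<in>S. C b i * w i $ a)" unfolding C by (simp add: sum_component)
    finally show ?thesis by (simp add: u_def mult.commute)
  qed
  have A_mult: "A *v y = (\<Sum>i\<in>S. (u i \<bullet> y) *\<^sub>R w i)" for y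
  proof -
    have "(A *v y) $ a = (\<Sum>i\<in>S. (u i \<bullet> y) *\<^sub>R w i) $ a" for a
    proof -
      have "(A *v y) $ a = (\<Sum>b\<in>UNIV. \<Sum>i\<in>S. w i $ a * u i $ b * y $ b)"
        by (simp add: matrix_vector_mult_def A_entry sum_distrib_right)
      also have "\<dots> = (\<Sum>i\<in>S. \<Sum>b\<in>UNIV. w i $ a * u i $ b * y $ b)"
        by (rule sum.swap)
      also have "\<dots> = (\<Sum>i\<in>S. (u i \<bullet> y) * w i $ a)"
        by (intro sum.cong refl) (simp add: inner_vec_def sum_distrib_left sum_distrib_right mult_ac)
      finally show ?thesis by (simp add: sum_component)
    qed
    then show ?thesis by (simp add: vec_eq_iff)
  qed
  text \<open>Each \<open>u i\<close> is orthogonal to the kernel of \<open>X\<close>, so it lies in the span of the frame.\<close>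
  have "u i \<in> span (w ` S)" if i: "i \<in> S" for i
  proof (rule in_span_if_orthogonal_to_complement)
    fix y assume "\<forall>j\<in>S. w j \<bullet> y = 0"
    then have "(\<Sum>i\<in>S. (u i \<bullet> y) *\<^sub>R w i) = 0" using kernel A_mult by metis
    then show "u i \<bullet> y = 0"
      using independent_sum_scaleR_eq_0[OF indep inj finite, of "\<lambda>i. u i \<bullet> y"] i by blast
  qed
  then have "\<forall>i. \<exists>c. i \<in> S \<longrightarrow> u i = (\<Sum>k\<in>S. c k *\<^sub>R w k)"
    using span_image_imp_sum_scaleR[OF finite _ inj] by blast
  then obtain D where D: "\<And>i. i \<in> S \<Longrightarrow> u i = (\<Sum>k\<in>S. D i k *\<^sub>R w k)"
    by (metis choice)
  have "A $ a $ b = (\<Sum>i\<in>S. \<Sum>k\<in>S. D i k * (w i $ a * w k $ b))" for a b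
  proof -
    have "A $ a $ b = (\<Sum>i\<in>S. w i $ a * (\<Sum>k\<in>S. D i k * w k $ b))"
      unfolding A_entry by (intro sum.cong refl) (simp add: D sum_component)
    then show ?thesis by (simp add: sum_distrib_left mult_ac)
  qed
  then show thesis by (rule that)
qed

lemma admissible_direction_imp_frame_matrix:
  assumes "admissible_direction X A"
  obtains B where "B \<in> sym_on S" "A = frame_matrix S w B"
proof -
  obtain D where D: "\<And>a b. A $ a $ b = (\<Sum>i\<in>S. \<Sum>k\<in>S. D i k * (w i $ a * w k $ b))"
    using admissible_direction_coeffs[OF assms] by blast
  define B where "B = (\<chi> i k. if i \<in> S \<and> k \<in> S then (D i k + D k i) / 2 else 0)"
  have "B \<in> sym_on S"
    unfolding sym_on_def symm_def B_def by (auto simp: vec_eq_iff transpose_def add.commute)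
  moreover have "A = frame_matrix S w B"
  proof -
    have "frame_matrix S w B $ a $ b = A $ a $ b" for a b
    proof -
      have "frame_matrix S w B $ a $ b = (\<Sum>i\<in>S. \<Sum>k\<in>S. (D i k + D k i) / 2 * (w i $ a * w k $ b))"
        unfolding frame_matrix_entry by (intro sum.cong refl) (simp add: B_def)
      also have "\<dots> = ((\<Sum>i\<in>S. \<Sum>k\<in>S. D i k * (w i $ a * w k $ b)) +
          (\<Sum>i\<in>S. \<Sum>k\<in>S. D k i * (w i $ a * w k $ b))) / 2"
        by (simp add: sum.distrib add_divide_distrib sum_divide_distrib ring_distribs)
      also have "(\<Sum>i\<in>S. \<Sum>k\<in>S. D k i * (w i $ a * w k $ b)) = A $ b $ a"
        unfolding D by (subst sum.swap) (simp add: mult_ac)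
      also have "A $ b $ a = A $ a $ b"
        using assms by (simp add: admissible_direction_def symm_entry)
      finally show ?thesis using D[of a b] by simp
    qed
    then show ?thesis by (simp add: vec_eq_iff)
  qed
  ultimately show thesis by (rule that)
qed

lemma frame_matrix_quadratic_form_bound:
  "\<exists>c\<ge>0. \<forall>z. \<bar>z \<bullet> (frame_matrix S w B *v z)\<bar> \<le> c * (z \<bullet> (X *v z))"
proof (intro exI conjI allI)
  let ?c = "\<Sum>i\<in>S. \<Sum>j\<in>S. \<bar>B $ i $ j\<bar>"
  show "0 \<le> ?c" by (intro sum_nonneg) auto
  fix z
  define Q where "Q = (\<Sum>k\<in>S. (w k \<bullet> z)^2)"
  have square: "(w k \<bullet> z)^2 \<le> Q" if "k \<in> S" for k
    unfolding Q_def using that by (intro member_le_sum) auto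
  have prod: "\<bar>(w j \<bullet> z) * (w i \<bullet> z)\<bar> \<le> Q" if "i \<in> S" "j \<in> S" for i j
    using abs_mult_le_if_squares_le[OF square[OF that(2)] square[OF that(1)]] .
  have "\<bar>z \<bullet> (frame_matrix S w B *v z)\<bar> \<le> (\<Sum>i\<in>S. \<Sum>j\<in>S. \<bar>B $ i $ j * (w j \<bullet> z) * (w i \<bullet> z)\<bar>)"
    unfolding frame_matrix_quadratic_form by (rule order.trans[OF sum_abs]) (intro sum_mono sum_abs)
  also have "\<dots> \<le> (\<Sum>i\<in>S. \<Sum>j\<in>S. \<bar>B $ i $ j\<bar> * Q)"
    using prod by (intro sum_mono) (simp add: abs_mult mult.assoc mult_left_mono)
  also have "\<dots> = ?c * (z \<bullet> (X *v z))"
    by (simp add: Q_def X_quadratic_form sum_distrib_right)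
  finally show "\<bar>z \<bullet> (frame_matrix S w B *v z)\<bar> \<le> ?c * (z \<bullet> (X *v z))" .
qed

lemma pert_elliptope2_eq_frame_image:
  assumes diag: "\<forall>i. X $ i $ i = 1"
  shows "pert elliptope2 X = frame_matrix S w ` {B \<in> sym_on S. diag_vec (frame_matrix S w B) = 0}"
proof
  show "pert elliptope2 X \<subseteq> frame_matrix S w ` {B \<in> sym_on S. diag_vec (frame_matrix S w B) = 0}"
  proof
    fix A assume "A \<in> pert elliptope2 X"
    then have A: "admissible_direction X A"
      by (rule pert_elliptope2_imp_admissible[OF diag])
    then obtain B where "B \<in> sym_on S" "A = frame_matrix S w B"
      by (rule admissible_direction_imp_frame_matrix)
    moreover have "diag_vec A = 0"
      using A by (simp add: admissible_direction_def diag_vec_def vec_eq_iff)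
    ultimately show "A \<in> frame_matrix S w ` {B \<in> sym_on S. diag_vec (frame_matrix S w B) = 0}"
      by blast
  qed
  show "frame_matrix S w ` {B \<in> sym_on S. diag_vec (frame_matrix S w B) = 0} \<subseteq> pert elliptope2 X"
  proof clarify
    fix B assume B: "B \<in> sym_on S" and diag0: "diag_vec (frame_matrix S w B) = 0"
    have zero_diag: "\<forall>i. frame_matrix S w B $ i $ i = 0"
      using diag0 by (simp add: diag_vec_def vec_eq_iff)
    obtain c where "c \<ge> 0" "\<And>z. \<bar>z \<bullet> (frame_matrix S w B *v z)\<bar> \<le> c * (z \<bullet> (X *v z))"
      using frame_matrix_quadratic_form_bound by blast
    then show "frame_matrix S w B \<in> pert elliptope2 X"
      by (rule pert_elliptope2_if_form_bounded[OF psd_X diag symm_frame_matrix[OF B] zero_diag])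
  qed
qed


text \<open>The diagonal of \<open>frame_matrix S w B\<close> at \<open>a\<close> is the inner product of \<open>vec B\<close>
  with \<open>r \<otimes> r\<close>, \<open>r\<close> the \<open>a\<close>-th row of the frame; the Gram matrix of these vectors is
  the entrywise square of \<open>X\<close>.\<close>

definition frame_row :: "'n \<Rightarrow> real^'n" where
  "frame_row a = (\<chi> i. if i \<in> S then w i $ a else 0)"

definition frame_kron :: "real^('n \<times> 'n)^'n" where
  "frame_kron = (\<chi> a. kron (frame_row a))"

lemma X_entry_frame_row: "X $ a $ b = frame_row a \<bullet> frame_row b"
proof -
  have "frame_row a \<bullet> frame_row b = (\<Sum>i\<in>UNIV. if i \<in> S then w i $ a * w i $ b else 0)"
    unfolding inner_vec_def frame_row_def by (intro sum.cong refl) simp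
  then show ?thesis by (simp add: sum_UNIV_if_mem X_entry)
qed

lemma hsq_eq_frame_kron: "hsq X = frame_kron ** transpose frame_kron"
proof -
  have "(frame_kron ** transpose frame_kron) $ a $ b = kron (frame_row a) \<bullet> kron (frame_row b)" for a b
    by (simp add: matrix_matrix_mult_def transpose_def frame_kron_def inner_vec_def)
  then show ?thesis by (simp add: vec_eq_iff kron_inner hsq_def X_entry_frame_row)
qed

lemma frame_kron_mult_vector_component:
  "(frame_kron *v y) $ a = (\<Sum>i\<in>UNIV. \<Sum>j\<in>UNIV. frame_row a $ i * frame_row a $ j * y $ (i, j))"
  by (simp add: matrix_vector_mult_def frame_kron_def kron_def sum_UNIV_prod)

lemma diag_vec_frame_matrix: "diag_vec (frame_matrix S w B) = frame_kron *v vecM B"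
proof -
  have "(frame_kron *v vecM B) $ a = diag_vec (frame_matrix S w B) $ a" for a
  proof -
    have "(frame_kron *v vecM B) $ a = (\<Sum>i\<in>UNIV. if i \<in> S then (\<Sum>j\<in>UNIV. if j \<in> S then
        B $ i $ j * (w i $ a * w j $ a) else 0) else 0)"
      unfolding frame_kron_mult_vector_component
      by (intro sum.cong refl) (auto simp: frame_row_def vecM_def intro!: sum.cong)
    then show ?thesis by (simp add: sum_UNIV_if_mem diag_vec_def frame_matrix_entry)
  qed
  then show ?thesis by (simp add: vec_eq_iff)
qed

definition sym_restrict :: "real^('n \<times> 'n) \<Rightarrow> real^'n^'n" where
  "sym_restrict y = (\<chi> i j. if i \<in> S \<and> j \<in> S then (y $ (i, j) + y $ (j, i)) / 2 else 0)"

lemma sym_restrict_in_sym_on: "sym_restrict y \<in> sym_on S"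
  unfolding sym_on_def symm_def sym_restrict_def by (auto simp: vec_eq_iff transpose_def add.commute)

lemma frame_kron_mult_sym_restrict: "frame_kron *v vecM (sym_restrict y) = frame_kron *v y"
proof -
  have "(frame_kron *v vecM (sym_restrict y)) $ a = (frame_kron *v y) $ a" for a
  proof -
    let ?r = "frame_row a"
    have outside: "?r $ i = 0" if "i \<notin> S" for i using that by (simp add: frame_row_def)
    have "(frame_kron *v vecM (sym_restrict y)) $ a =
        (\<Sum>i\<in>UNIV. \<Sum>j\<in>UNIV. (?r $ i * ?r $ j * y $ (i, j) + ?r $ i * ?r $ j * y $ (j, i)) / 2)"
      unfolding frame_kron_mult_vector_component
      using outside by (intro sum.cong refl)
        (auto simp: vecM_def sym_restrict_def algebra_simps)
    also have "\<dots> = ((\<Sum>i\<in>UNIV. \<Sum>j\<in>UNIV. ?r $ i * ?r $ j * y $ (i, j)) +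
        (\<Sum>i\<in>UNIV. \<Sum>j\<in>UNIV. ?r $ i * ?r $ j * y $ (j, i))) / 2"
      by (simp add: sum.distrib add_divide_distrib sum_divide_distrib)
    also have "(\<Sum>i\<in>UNIV. \<Sum>j\<in>UNIV. ?r $ i * ?r $ j * y $ (j, i)) =
        (\<Sum>i\<in>UNIV. \<Sum>j\<in>UNIV. ?r $ i * ?r $ j * y $ (i, j))"
      by (subst sum.swap) (simp add: mult.commute)
    finally show ?thesis unfolding frame_kron_mult_vector_component by simp
  qed
  then show ?thesis by (simp add: vec_eq_iff)
qed

lemma dim_diag_vec_frame_matrix_image:
  "dim ((\<lambda>B. diag_vec (frame_matrix S w B)) ` sym_on S) = rank (hsq X)"
proof -
  have "(\<lambda>B. diag_vec (frame_matrix S w B)) ` sym_on S = range (\<lambda>y. frame_kron *v y)"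
  proof
    show "(\<lambda>B. diag_vec (frame_matrix S w B)) ` sym_on S \<subseteq> range (\<lambda>y. frame_kron *v y)"
      using diag_vec_frame_matrix by auto
    show "range (\<lambda>y. frame_kron *v y) \<subseteq> (\<lambda>B. diag_vec (frame_matrix S w B)) ` sym_on S"
      using diag_vec_frame_matrix frame_kron_mult_sym_restrict sym_restrict_in_sym_on
      by (metis (no_types, lifting) image_eqI image_subsetI rangeE)
  qed
  then have "dim ((\<lambda>B. diag_vec (frame_matrix S w B)) ` sym_on S) = rank frame_kron"
    by (simp add: rank_dim_range)
  also have "\<dots> = rank (hsq X)"
    by (simp add: hsq_eq_frame_kron rank_mult_transpose_self)
  finally show ?thesis .
qed

lemma dim_pert_elliptope2_add_rank_hsq:
  assumes "\<forall>i. X $ i $ i = 1"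
  shows "dim (pert elliptope2 X) + rank (hsq X) = dim (sym_on S)"
proof -
  let ?Z = "{B \<in> sym_on S. diag_vec (frame_matrix S w B) = 0}"
  have linear_diag: "linear (\<lambda>B. diag_vec (frame_matrix S w B))"
    using linear_compose[OF linear_frame_matrix linear_diag_vec] by (simp add: o_def)
  have "?Z = sym_on S \<inter> {B. diag_vec (frame_matrix S w B) = 0}" by blast
  then have "subspace ?Z"
    using subspace_inter[OF subspace_sym_on linear_subspace_kernel[OF linear_diag]] by simp
  then have "span ?Z = ?Z" by (rule span_eq_iff[THEN iffD2])
  then have "dim (frame_matrix S w ` ?Z) = dim ?Z"
    using dim_image_eq[OF linear_frame_matrix] inj_on_subset[OF inj_on_frame_matrix]
    by (metis (no_types, lifting) mem_Collect_eq subsetI)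
  moreover have "dim ((\<lambda>B. diag_vec (frame_matrix S w B)) ` sym_on S) + dim ?Z = dim (sym_on S)"
    by (rule dim_image_add_dim_kernel[OF linear_diag subspace_sym_on])
  ultimately show ?thesis
    using pert_elliptope2_eq_frame_image[OF assms] dim_diag_vec_frame_matrix_image by simp
qed

end

lemma pert_elliptope2_iff:
  fixes X :: "real^'n^'n"
  assumes "psd X" "\<forall>i. X $ i $ i = 1"
  shows "A \<in> pert elliptope2 X \<longleftrightarrow> admissible_direction X A"
proof
  assume "admissible_direction X A"
  obtain S w where "psd_frame X S w" using psd_frame_exists[OF assms(1)] by blast
  then interpret psd_frame X S w .
  obtain B where "B \<in> sym_on S" "A = frame_matrix S w B"
    using admissible_direction_imp_frame_matrix[OF \<open>admissible_direction X A\<close>] by blast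
  moreover have "diag_vec (frame_matrix S w B) = 0"
    using \<open>admissible_direction X A\<close> calculation(2)
    by (simp add: admissible_direction_def diag_vec_def vec_eq_iff)
  ultimately show "A \<in> pert elliptope2 X"
    using pert_elliptope2_eq_frame_image[OF assms(2)] by blast
qed (rule pert_elliptope2_imp_admissible[OF assms(2)])

lemma dim_pert_elliptope2:
  fixes X :: "real^('n::{finite,linorder})^('n::{finite,linorder})"
  assumes "psd X" "\<forall>i. X $ i $ i = 1"
  shows "dim (pert elliptope2 X) + rank (hsq X) = rank X * (rank X + 1) div 2"
proof -
  obtain S w where frame: "psd_frame X S w" and card: "card S = rank X"
    using psd_frame_exists[OF assms(1)] by blast
  interpret psd_frame X S w by (rule frame)
  show ?thesis
    using dim_pert_elliptope2_add_rank_hsq[OF assms(2)] dim_sym_on[of S] card by simp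
qed

section \<open>Degree 4 pseudomoment matrices\<close>

lemma pseudomoment4_permute:
  assumes "pseudomoment4 Y" "\<sigma> permutes {0..<4::nat}"
  shows "Y $ ([i, j, k, l] ! \<sigma> 0, [i, j, k, l] ! \<sigma> 1) $ ([i, j, k, l] ! \<sigma> 2, [i, j, k, l] ! \<sigma> 3)
    = Y $ (i, j) $ (k, l)"
  using assms unfolding pseudomoment4_def Let_def by blast

lemma pseudomoment4_swap_left:
  assumes "pseudomoment4 Y"
  shows "Y $ (j, i) $ (k, l) = Y $ (i, j) $ (k, l)"
proof -
  have "Transposition.transpose (0::nat) 1 permutes {0..<4}" by (rule permutes_swap_id) auto
  then show ?thesis
    using pseudomoment4_permute[OF assms, of "Transposition.transpose 0 1" i j k l]
    by (simp add: Transposition.transpose_def)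
qed

lemma pseudomoment4_swap_inner:
  assumes "pseudomoment4 Y"
  shows "Y $ (i, k) $ (j, l) = Y $ (i, j) $ (k, l)"
proof -
  have "Transposition.transpose (1::nat) 2 permutes {0..<4}" by (rule permutes_swap_id) auto
  then show ?thesis
    using pseudomoment4_permute[OF assms, of "Transposition.transpose 1 2" i j k l]
    by (simp add: Transposition.transpose_def)
qed

lemma pseudomoment4_symm_entry: "pseudomoment4 Y \<Longrightarrow> Y $ q $ p = Y $ p $ q"
  by (simp add: pseudomoment4_def psd_def symm_entry)

lemma pseudomoment4_swap_right:
  assumes "pseudomoment4 Y"
  shows "Y $ (i, j) $ (l, k) = Y $ (i, j) $ (k, l)"
proof -
  have "Y $ (i, j) $ (l, k) = Y $ (l, k) $ (i, j)" by (rule pseudomoment4_symm_entry[OF assms])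
  also have "\<dots> = Y $ (k, l) $ (i, j)" by (rule pseudomoment4_swap_left[OF assms])
  also have "\<dots> = Y $ (i, j) $ (k, l)" by (rule pseudomoment4_symm_entry[OF assms])
  finally show ?thesis .
qed

definition block_vec :: "'n \<Rightarrow> real^'n \<Rightarrow> real^('n \<times> 'n)" where
  "block_vec a z = (\<chi> p. if fst p = a then z $ snd p else 0)"

lemma inner_block_vec: "block_vec a z \<bullet> v = (\<Sum>j\<in>UNIV. z $ j * v $ (a, j))"
proof -
  have "block_vec a z \<bullet> v = (\<Sum>i\<in>UNIV. if i = a then (\<Sum>j\<in>UNIV. z $ j * v $ (i, j)) else 0)"
    unfolding inner_vec_def sum_UNIV_prod block_vec_def by (intro sum.cong refl) auto
  then show ?thesis by simp
qed

lemma mult_block_vec_component: "(Y *v block_vec a z) $ q = (\<Sum>j\<in>UNIV. Y $ q $ (a, j) * z $ j)"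
proof -
  have "(Y *v block_vec a z) $ q = block_vec a z \<bullet> Y $ q"
    by (simp add: matrix_vector_mult_def inner_vec_def mult.commute)
  then show ?thesis by (simp add: inner_block_vec mult.commute)
qed

lemma pert_subset_0_if_extreme_point:
  assumes "X extreme_point_of K"
  shows "pert K X \<subseteq> {0}"
proof
  fix A assume "A \<in> pert K X"
  then obtain e where e: "e > 0" "\<forall>t. 0 < t \<and> t < e \<longrightarrow> X + t *\<^sub>R A \<in> K \<and> X - t *\<^sub>R A \<in> K"
    unfolding pert_def by blast
  define t where "t = e / 2"
  have t: "0 < t" "X + t *\<^sub>R A \<in> K" "X - t *\<^sub>R A \<in> K"
    using e by (auto simp: t_def)
  have "X = midpoint (X - t *\<^sub>R A) (X + t *\<^sub>R A)"
    by (simp add: midpoint_def scaleR_add_right[symmetric])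
  moreover have "X \<notin> open_segment (X - t *\<^sub>R A) (X + t *\<^sub>R A)"
    using assms t(2,3) unfolding extreme_point_of_def by blast
  ultimately have "X - t *\<^sub>R A = X + t *\<^sub>R A"
    using midpoint_in_open_segment by metis
  then have "A = 0"
    using t(1) by (smt (verit, del_insts) add_diff_eq diff_add_cancel scaleR_cancel_right
        scaleR_left_diff_distrib)
  then show "A \<in> {0}" by simp
qed

lemma linear_vecM: "linear vecM"
  by (rule linearI) (simp_all add: vecM_def vec_eq_iff)

locale pseudomoment_extension =
  fixes Y :: "((real, 'n::{finite,wellorder} \<times> 'n) vec, 'n \<times> 'n) vec"
    and X :: "((real, 'n) vec, 'n) vec"
  assumes pseudomoment: "pseudomoment4 Y" and extends: "extends4 Y X"
begin

lemma psd_Y: "psd Y"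
  using pseudomoment by (simp add: pseudomoment4_def)

lemma Y_entry_square_index: "Y $ (i, j) $ (k, k) = X $ i $ j"
proof -
  let ?o = "LEAST k. True"
  have "Y $ (i, j) $ (k, k) = Y $ (i, j) $ (?o, ?o)"
    using pseudomoment by (simp add: pseudomoment4_def)
  also have "\<dots> = Y $ (i, ?o) $ (j, ?o)"
    by (rule pseudomoment4_swap_inner[OF pseudomoment, symmetric])
  also have "\<dots> = Y $ (?o, i) $ (?o, j)"
    using pseudomoment4_swap_left[OF pseudomoment] pseudomoment4_swap_right[OF pseudomoment]
    by simp
  also have "\<dots> = X $ i $ j"
    using extends by (simp add: extends4_def)
  finally show ?thesis .
qed

lemma Y_block_entry: "Y $ (a, i) $ (a, j) = X $ i $ j"
proof -
  have "Y $ (a, i) $ (a, j) = Y $ (a, a) $ (i, j)" by (rule pseudomoment4_swap_inner[OF pseudomoment])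
  also have "\<dots> = Y $ (i, j) $ (a, a)" by (rule pseudomoment4_symm_entry[OF pseudomoment])
  finally show ?thesis by (simp add: Y_entry_square_index)
qed

lemma X_diag: "X $ i $ i = 1"
proof -
  have "X $ i $ i = Y $ (i, i) $ (i, i)" by (rule Y_entry_square_index[symmetric])
  also have "\<dots> = 1" using pseudomoment by (simp add: pseudomoment4_def)
  finally show ?thesis .
qed

lemma block_vec_quadratic_form: "block_vec a z \<bullet> (Y *v block_vec a z) = z \<bullet> (X *v z)"
  unfolding inner_block_vec mult_block_vec_component Y_block_entry
  by (simp add: inner_vec_def matrix_vector_mult_def sum_distrib_left mult.assoc)

lemma X_in_elliptope2: "X \<in> elliptope2"
proof -
  have "X $ j $ i = X $ i $ j" for i j
    using Y_block_entry pseudomoment4_symm_entry[OF pseudomoment] by metis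
  then have "symm X" by (simp add: symm_def transpose_def vec_eq_iff)
  moreover have "0 \<le> z \<bullet> (X *v z)" for z
  proof -
    have "0 \<le> block_vec a z \<bullet> (Y *v block_vec a z)" for a
      using psd_Y by (simp add: psd_def)
    then show ?thesis by (simp add: block_vec_quadratic_form)
  qed
  ultimately show ?thesis by (simp add: elliptope2_def psd_def X_diag)
qed

lemma psd_X: "psd X" and X_diag_all: "\<forall>i. X $ i $ i = 1"
  using X_in_elliptope2 by (simp_all add: elliptope2_def)

abbreviation residual where "residual \<equiv> Y - outer (vecM X) (vecM X)"

lemma Y_mult_axis_diag: "Y *v axis (a, a) 1 = vecM X"
  by (simp add: vec_eq_iff mult_axis_component vecM_def Y_entry_square_index)

lemma psd_residual: "psd residual"
proof -
  have "axis (a, a) 1 \<bullet> (Y *v axis (a, a) 1) = 1" for a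
    using pseudomoment by (simp add: axis_inner_mult_axis pseudomoment4_def)
  from psd_schur_complement[OF psd_Y this] show ?thesis by (simp add: Y_mult_axis_diag)
qed

lemma Y_row_kernel:
  assumes "X *v z = 0"
  shows "(\<Sum>j\<in>UNIV. Y $ (i, j) $ q * z $ j) = 0"
proof -
  have "Y *v block_vec i z = 0"
    using assms block_vec_quadratic_form by (intro psd_mult_eq_0_if_quadratic_eq_0[OF psd_Y]) simp
  then have "(Y *v block_vec i z) $ q = 0" by simp
  then show ?thesis
    by (simp add: mult_block_vec_component pseudomoment4_symm_entry[OF pseudomoment, of q])
qed

lemma residual_mult_in_pert: "residual *v x \<in> vecM ` pert elliptope2 X"
proof -
  define A where "A = (\<chi> i j. (residual *v x) $ (i, j))"
  have A: "A $ i $ j = (\<Sum>q\<in>UNIV. (Y $ (i, j) $ q - X $ i $ j * vecM X $ q) * x $ q)" for i j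
    by (simp add: A_def matrix_vector_mult_def outer_def vecM_def)
  have swap: "Y $ (j, i) $ q = Y $ (i, j) $ q" for i j q
    using pseudomoment4_swap_left[OF pseudomoment] by (cases q) simp
  have "A $ j $ i = A $ i $ j" for i j
    unfolding A by (simp add: swap symm_entry[OF psd_imp_symm[OF psd_X]])
  then have "symm A" by (simp add: symm_def transpose_def vec_eq_iff)
  moreover have "A $ i $ i = 0" for i
  proof -
    have "Y $ (i, i) $ q = vecM X $ q" for q
      using pseudomoment4_symm_entry[OF pseudomoment] Y_entry_square_index
      by (cases q) (simp add: vecM_def)
    then show ?thesis by (simp add: A X_diag)
  qed
  moreover have "A *v z = 0" if z: "X *v z = 0" for z
  proof -
    have X_row: "(\<Sum>j\<in>UNIV. X $ i $ j * z $ j) = 0" for i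
      using arg_cong[OF z, of "\<lambda>v. v $ i"] by (simp add: matrix_vector_mult_def)
    have "(A *v z) $ i = 0" for i
    proof -
      have "(A *v z) $ i =
          (\<Sum>j\<in>UNIV. \<Sum>q\<in>UNIV. (Y $ (i, j) $ q - X $ i $ j * vecM X $ q) * x $ q * z $ j)"
        by (simp add: matrix_vector_mult_def A sum_distrib_right)
      also have "\<dots> = (\<Sum>q\<in>UNIV. \<Sum>j\<in>UNIV. (Y $ (i, j) $ q - X $ i $ j * vecM X $ q) * x $ q * z $ j)"
        by (rule sum.swap)
      also have "\<dots> = (\<Sum>q\<in>UNIV. x $ q * (\<Sum>j\<in>UNIV. Y $ (i, j) $ q * z $ j)
          - x $ q * vecM X $ q * (\<Sum>j\<in>UNIV. X $ i $ j * z $ j))"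
        by (intro sum.cong refl)
          (simp add: sum_distrib_left sum_subtractf[symmetric] algebra_simps)
      also have "\<dots> = 0" by (simp add: Y_row_kernel[OF z] X_row)
      finally show ?thesis .
    qed
    then show ?thesis by (simp add: vec_eq_iff)
  qed
  ultimately have "A \<in> pert elliptope2 X"
    by (simp add: pert_elliptope2_iff[OF psd_X X_diag_all] admissible_direction_def)
  moreover have "residual *v x = vecM A" by (simp add: A_def vecM_def vec_eq_iff)
  ultimately show ?thesis by (intro image_eqI)
qed

lemma residual_eigenvector_in_pert:
  assumes "residual *v v = \<mu> *\<^sub>R v" "\<mu> \<noteq> 0"
  shows "v \<in> vecM ` pert elliptope2 X"
proof -
  have "residual *v ((1 / \<mu>) *\<^sub>R v) = v"
    using assms by (simp add: matrix_vector_mult_scaleR)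
  then show ?thesis using residual_mult_in_pert by metis
qed

lemma rank_Y_le: "rank Y \<le> dim (pert elliptope2 X) + 1"
proof -
  let ?P = "vecM ` pert elliptope2 X"
  have "Y *v x \<in> span (insert (vecM X) ?P)" for x
  proof -
    have "Y *v x = residual *v x + (vecM X \<bullet> x) *\<^sub>R vecM X"
      by (simp add: matrix_vector_mult_diff_rdistrib outer_mult_vector)
    moreover have "residual *v x \<in> span (insert (vecM X) ?P)"
      using residual_mult_in_pert by (intro span_base) blast
    moreover have "(vecM X \<bullet> x) *\<^sub>R vecM X \<in> span (insert (vecM X) ?P)"
      by (intro span_mul span_base) simp
    ultimately show ?thesis by (simp add: span_add)
  qed
  then have "rank Y \<le> dim (insert (vecM X) ?P)" by (rule rank_le_dim_if_mult_in_span)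
  also have "\<dots> \<le> dim ?P + 1" by (simp add: dim_insert)
  finally show ?thesis using dim_image_le[OF linear_vecM, of "pert elliptope2 X"] by linarith
qed

lemma rank_hsq_ge_1: "rank (hsq X) \<ge> 1"
proof -
  have "hsq X $ i $ i = 1" for i by (simp add: hsq_def X_diag)
  then have "hsq X \<noteq> 0" by (metis zero_index zero_neq_one)
  then have "rank (hsq X) \<noteq> 0" by (simp add: rank_eq_0)
  then show ?thesis by simp
qed

lemma Y_eq_outer_if_extreme_point:
  assumes "X extreme_point_of elliptope2"
  shows "Y = outer (vecM X) (vecM X)"
proof -
  have "residual *v x = 0" for x
    using residual_mult_in_pert[of x] pert_subset_0_if_extreme_point[OF assms]
    by (auto simp: vecM_def vec_eq_iff)
  then have "residual $ p $ q = 0" for p q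
    by (metis mult_axis_component zero_index)
  then show ?thesis by (simp add: vec_eq_iff)
qed

text \<open>If \<open>Y = vec X vec X\<^sup>T\<close> then every block \<open>X\<close> of \<open>Y\<close> is the rank one matrix \<open>x x\<^sup>T\<close>
  built from one row \<open>x\<close> of \<open>X\<close>, and the unit diagonal forces \<open>x\<close> to be a sign vector.\<close>

lemma sign_vector_if_Y_eq_outer:
  assumes "Y = outer (vecM X) (vecM X)"
  obtains x where "\<forall>i. x $ i = 1 \<or> x $ i = -1" "X = outer x x" "Y = outer (kron x) (kron x)"
proof
  define x where "x = (\<chi> i. X $ undefined $ i)"
  show X: "X = outer x x"
    using Y_block_entry[of undefined] assms by (simp add: vec_eq_iff outer_def vecM_def x_def)
  show "\<forall>i. x $ i = 1 \<or> x $ i = -1"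
    using X_diag X by (simp add: outer_def power2_eq_1_iff flip: power2_eq_square)
  have "vecM X = kron x" using X by (simp add: vec_eq_iff vecM_def kron_def outer_def)
  then show "Y = outer (kron x) (kron x)" using assms by simp
qed

lemma rank_one_if_extreme_point:
  assumes "X extreme_point_of elliptope2"
  shows "rank Y = 1 \<and> rank X = 1 \<and>
    (\<exists>x. (\<forall>i. x $ i = 1 \<or> x $ i = -1) \<and> X = outer x x \<and> Y = outer (kron x) (kron x))"
proof -
  obtain x where x: "\<forall>i. x $ i = 1 \<or> x $ i = -1" and X: "X = outer x x"
    and Y: "Y = outer (kron x) (kron x)"
    using sign_vector_if_Y_eq_outer[OF Y_eq_outer_if_extreme_point[OF assms]] by blast
  have "kron x $ (i, i) = 1" for i
    using x[rule_format, of i] by (auto simp: kron_def)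
  then have "x \<noteq> 0" "kron x \<noteq> 0"
    by (metis kron_def mult_zero_left vec_lambda_beta zero_index zero_neq_one)+
  then show ?thesis using x X Y rank_outer_self by metis
qed

end

theorem theorem3:
  fixes X :: "((real, 'n::{finite,wellorder}) vec, 'n) vec"
    and Y :: "((real, 'n \<times> 'n) vec, 'n \<times> 'n) vec"
  assumes "X \<in> elliptope4"
    and "pseudomoment4 Y"
    and "extends4 Y X"
  shows "psd (Y - outer (vecM X) (vecM X)) \<and>
    (\<forall>v (\<mu>::real). v \<noteq> 0 \<and> \<mu> \<noteq> 0 \<and> (Y - outer (vecM X) (vecM X)) *v v = \<mu> *\<^sub>R v
           \<longrightarrow> v \<in> vecM ` pert elliptope2 X) \<and>
    rank Y \<le> dim (pert elliptope2 X) + 1 \<and>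
    real (dim (pert elliptope2 X)) + 1
           = real (rank X) * (real (rank X) + 1) / 2 - real (rank (hsq X)) + 1 \<and>
    real (rank X) * (real (rank X) + 1) / 2 - real (rank (hsq X)) + 1
           \<le> real (rank X) * (real (rank X) + 1) / 2 \<and>
    (X extreme_point_of elliptope2 \<longrightarrow>
           rank Y = 1 \<and> rank X = 1 \<and>
           (\<exists>x :: (real, 'n) vec. (\<forall>i. x $ i = 1 \<or> x $ i = -1) \<and>
              X = outer x x \<and> Y = outer (kron x) (kron x)))"
proof -
  interpret pseudomoment_extension Y X using assms(2,3) by unfold_locales
  have "real (dim (pert elliptope2 X)) + real (rank (hsq X)) = real (rank X * (rank X + 1) div 2)"
    using dim_pert_elliptope2[OF psd_X X_diag_all] by (metis of_nat_add)
  also have "\<dots> = real (rank X) * (real (rank X) + 1) / 2"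
    by (simp add: real_of_nat_div algebra_simps)
  finally show ?thesis
    using psd_residual residual_eigenvector_in_pert rank_Y_le rank_hsq_ge_1
      rank_one_if_extreme_point by auto
qed

end
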